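(* Let $(M,g)$ be a time-oriented Lorentzian manifold (without boundary) and $x\in M$. If there exists $y\in\downarrow I^+(x)$ with $y\notin I^-(x)$, then there exists $z\in\downarrow I^+(x)$ with $z\notin\overline{I^-(x)}$. Dually, if $\uparrow I^-(x)\setminus I^+(x)\ne\emptyset$, then there exists $z\in\uparrow I^-(x)$ with $z\notin\overline{I^+(x)}$.
   Context: $a\ll b$ means there is a future directed $C^1$ timelike curve from $a$ to $b$; $I^+(x)=\{b:x\ll b\}$, $I^-(x)=\{b:b\ll x\}$. For an open set $U$, $\downarrow U=\mathrm{Int}\{c:c\ll u\ \forall u\in U\}$ and $\uparrow U=\mathrm{Int}\{c:u\ll c\ \forall u\in U\}$. Overline denotes topological closure in $M$. *)

theory Defs
  imports "HOL-Analysis.Analysis"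
begin

text \<open>A chart is a pair (U, phi) with U an open subset of the manifold and phi a
  homeomorphism of U onto an open subset of R^n (n = CARD('n)).
  The manifold itself is the whole carrier type 'm.\<close>

type_synonym ('m, 'n) chart = "'m set \<times> ('m \<Rightarrow> real^'n)"

fun Ck :: "nat \<Rightarrow> (real^'n) set \<Rightarrow> (real^'n \<Rightarrow> 'b::real_normed_vector) \<Rightarrow> bool" where
  "Ck 0 S f = continuous_on S f"
| "Ck (Suc k) S f = (f differentiable_on S \<and>
      (\<forall>i. Ck k S (\<lambda>x. frechet_derivative f (at x) (axis i 1))))"

definition smooth_on_set :: "(real^'n) set \<Rightarrow> (real^'n \<Rightarrow> 'b::real_normed_vector) \<Rightarrow> bool" where
  "smooth_on_set S f \<longleftrightarrow> (\<forall>k. Ck k S f)"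

definition is_chart :: "('m::topological_space, 'n::finite) chart \<Rightarrow> bool" where
  "is_chart c \<longleftrightarrow> (case c of (U, \<phi>) \<Rightarrow>
     open U \<and> open (\<phi> ` U) \<and> homeomorphism U (\<phi> ` U) \<phi> (inv_into U \<phi>))"

definition transition :: "('m, 'n) chart \<Rightarrow> ('m, 'n) chart \<Rightarrow> real^'n \<Rightarrow> real^'n" where
  "transition c1 c2 = snd c2 \<circ> inv_into (fst c1) (snd c1)"

definition smooth_atlas :: "('m::topological_space, 'n::finite) chart set \<Rightarrow> bool" where
  "smooth_atlas A \<longleftrightarrow> (\<forall>c\<in>A. is_chart c) \<and> (\<Union>c\<in>A. fst c) = UNIV \<and>
     (\<forall>c1\<in>A. \<forall>c2\<in>A. smooth_on_set (snd c1 ` (fst c1 \<inter> fst c2)) (transition c1 c2))"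

definition gform :: "real^'n^'n \<Rightarrow> real^'n \<Rightarrow> real^'n \<Rightarrow> real" where
  "gform B u v = u \<bullet> (B *v v)"

definition lorentz_sig :: "real^'n^'n \<Rightarrow> bool" where
  "lorentz_sig B \<longleftrightarrow> transpose B = B \<and>
     (\<exists>(P::real^'n^'n) i0. invertible P \<and>
        transpose P ** B ** P = (\<chi> i j. if i = j then (if i = i0 then -1 else 1) else 0))"

text \<open>(A, G, X) is a time-oriented Lorentzian manifold structure on the type 'm:
  A is a smooth atlas, G c gives the coordinate matrix of the metric g in chart c
  (smooth, Lorentzian, transforming as a (0,2)-tensor), and X c is the coordinate
  expression in chart c of a continuous timelike vector field X (the time orientation).\<close>
definition time_oriented_lorentzian ::
  "('m::topological_space, 'n::finite) chart set \<Rightarrow> (('m, 'n) chart \<Rightarrow> real^'n \<Rightarrow> real^'n^'n)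
    \<Rightarrow> (('m, 'n) chart \<Rightarrow> real^'n \<Rightarrow> real^'n) \<Rightarrow> bool" where
  "time_oriented_lorentzian A G X \<longleftrightarrow>
     smooth_atlas A \<and>
     (\<forall>c\<in>A. smooth_on_set (snd c ` fst c) (G c) \<and>
        (\<forall>a\<in>snd c ` fst c. lorentz_sig (G c a))) \<and>
     (\<forall>c1\<in>A. \<forall>c2\<in>A. \<forall>p\<in>fst c1 \<inter> fst c2. \<forall>u v.
        gform (G c1 (snd c1 p)) u v =
        gform (G c2 (snd c2 p)) (frechet_derivative (transition c1 c2) (at (snd c1 p)) u)
                                (frechet_derivative (transition c1 c2) (at (snd c1 p)) v)) \<and>
     (\<forall>c\<in>A. continuous_on (snd c ` fst c) (X c) \<and>
        (\<forall>a\<in>snd c ` fst c. gform (G c a) (X c a) (X c a) < 0)) \<and>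
     (\<forall>c1\<in>A. \<forall>c2\<in>A. \<forall>p\<in>fst c1 \<inter> fst c2.
        X c2 (snd c2 p) = frechet_derivative (transition c1 c2) (at (snd c1 p)) (X c1 (snd c1 p)))"

definition fut_timelike_curve ::
  "('m::topological_space, 'n::finite) chart set \<Rightarrow> (('m, 'n) chart \<Rightarrow> real^'n \<Rightarrow> real^'n^'n)
    \<Rightarrow> (('m, 'n) chart \<Rightarrow> real^'n \<Rightarrow> real^'n) \<Rightarrow> (real \<Rightarrow> 'm) \<Rightarrow> 'm \<Rightarrow> 'm \<Rightarrow> bool" where
  "fut_timelike_curve A G X \<gamma> a b \<longleftrightarrow>
     continuous_on {0..1} \<gamma> \<and> \<gamma> 0 = a \<and> \<gamma> 1 = b \<and>
     (\<forall>c\<in>A. \<exists>\<gamma>'. continuous_on {t\<in>{0..1}. \<gamma> t \<in> fst c} \<gamma>' \<and>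
        (\<forall>t\<in>{t\<in>{0..1}. \<gamma> t \<in> fst c}.
           ((snd c \<circ> \<gamma>) has_vector_derivative \<gamma>' t) (at t within {t\<in>{0..1}. \<gamma> t \<in> fst c}) \<and>
           gform (G c (snd c (\<gamma> t))) (\<gamma>' t) (\<gamma>' t) < 0 \<and>
           gform (G c (snd c (\<gamma> t))) (\<gamma>' t) (X c (snd c (\<gamma> t))) < 0))"

definition chron ::
  "('m::topological_space, 'n::finite) chart set \<Rightarrow> (('m, 'n) chart \<Rightarrow> real^'n \<Rightarrow> real^'n^'n)
    \<Rightarrow> (('m, 'n) chart \<Rightarrow> real^'n \<Rightarrow> real^'n) \<Rightarrow> 'm \<Rightarrow> 'm \<Rightarrow> bool" where
  "chron A G X a b \<longleftrightarrow> (\<exists>\<gamma>. fut_timelike_curve A G X \<gamma> a b)"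

definition Ifut where "Ifut A G X x = {b. chron A G X x b}"
definition Ipast where "Ipast A G X x = {b. chron A G X b x}"

definition down_set where
  "down_set A G X U = interior {c. \<forall>u\<in>U. chron A G X c u}"
definition up_set where
  "up_set A G X U = interior {c. \<forall>u\<in>U. chron A G X u c}"

end

(* The key fact is that the interior of the closure of I^-(x) lies in I^-(x). Let p be in that
   interior and use a chart around p, with coordinates a at p. Future timelike vectors form an open
   convex cone that depends continuously on the base point. Since I^-(x) is dense near p, some point b
   of I^-(x) has coordinates close to a + delta X(a); let beta be a future timelike curve from b to x.
   On a short interval [0, tau] replace beta by s |-> beta s - (1 - s/tau)^2 (b - a): this curve
   starts at p, and for small tau its velocity beta' s + 2 (1 - s/tau)/tau (b - a) stays future
   timelike. Hence p << x.
   The down set of I^+(x) is open, so if it lay in the closure of I^-(x) it would lie in I^-(x).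
   Reversing the time orientation exchanges I^+ and I^-, which gives the dual statement. *)

theory Submission
  imports Defs
begin

lemma gform_add_left: "gform B (u + v) w = gform B u w + gform B v w"
  by (simp add: gform_def inner_add_left)

lemma gform_add_right: "gform B w (u + v) = gform B w u + gform B w v"
  by (simp add: gform_def matrix_vector_right_distrib inner_add_right)

lemma gform_scaleR_left: "gform B (c *\<^sub>R u) w = c * gform B u w"
  by (simp add: gform_def)

lemma gform_scaleR_right: "gform B w (c *\<^sub>R u) = c * gform B w u"
  by (simp add: gform_def matrix_vector_mult_scaleR)

lemma gform_diff_left: "gform B (u - v) w = gform B u w - gform B v w"
  by (simp add: gform_def inner_diff_left)

lemma gform_diff_right: "gform B w (u - v) = gform B w u - gform B w v"
  by (simp add: gform_def matrix_vector_mult_diff_distrib inner_diff_right)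

lemma gform_minus_left: "gform B (- u) w = - gform B u w"
  by (simp add: gform_def)

lemma gform_minus_right: "gform B w (- u) = - gform B w u"
  using gform_scaleR_right[of B w "-1" u] by simp

lemmas gform_linear = gform_add_left gform_add_right gform_scaleR_left gform_scaleR_right
  gform_diff_left gform_diff_right gform_minus_left gform_minus_right

lemma gform_commute:
  assumes "transpose B = B"
  shows "gform B u v = gform B v u"
  using assms by (metis dot_lmul_matrix gform_def inner_commute vector_transpose_matrix)

lemma gform_congruence: "gform (transpose P ** B ** P) z z = gform B (P *v z) (P *v z)"
  by (simp add: gform_def matrix_vector_mul_assoc[symmetric])
     (metis dot_lmul_matrix inner_commute vector_transpose_matrix)

lemma gform_diagonal:
  "gform (\<chi> i j. if i = j then d i else 0) z z = (\<Sum>i\<in>UNIV. d i * (z $ i)\<^sup>2)"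
proof -
  have "(\<chi> i j. if i = j then d i else 0) *v z = (\<chi> i. d i * z $ i)"
    by (simp add: matrix_vector_mult_def if_distrib[of "\<lambda>x. x * _"] cong: if_cong)
  thus ?thesis by (simp add: gform_def inner_vec_def power2_eq_square ac_simps)
qed

lemma lorentz_orthogonal_timelike_nonneg:
  fixes B :: "real^'n^'n"
  assumes L: "lorentz_sig B" and X: "gform B X X < 0" and orth: "gform B v X = 0"
  shows "gform B v v \<ge> 0"
proof (rule ccontr)
  assume "\<not> gform B v v \<ge> 0"
  hence vneg: "gform B v v < 0" by simp
  from L obtain P :: "real^'n^'n" and i0 where sym: "transpose B = B" and inv: "invertible P"
    and D: "transpose P ** B ** P = (\<chi> i j. if i = j then (if i = i0 then -1 else 1) else 0)"
    unfolding lorentz_sig_def by blast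
  from inv obtain Q where "P ** Q = mat 1" using invertible_right_inverse by blast
  hence PQ: "P *v (Q *v y) = y" for y by (simp add: matrix_vector_mul_assoc)
  \<comment> \<open>a nonzero combination of v and X whose i0-th coordinate in the diagonalising basis
    vanishes, so that the form is nonnegative on it\<close>
  obtain \<alpha> \<beta> :: real where ab: "\<alpha> \<noteq> 0 \<or> \<beta> \<noteq> 0" and z0: "\<alpha> * (Q *v v) $ i0 + \<beta> * (Q *v X) $ i0 = 0"
  proof (cases "(Q *v X) $ i0 = 0 \<and> (Q *v v) $ i0 = 0")
    case True then show ?thesis using that[of 1 0] by simp
  next
    case False then show ?thesis using that[of "(Q *v X) $ i0" "- (Q *v v) $ i0"] by (auto simp: algebra_simps)
  qed
  define z where "z = \<alpha> *\<^sub>R (Q *v v) + \<beta> *\<^sub>R (Q *v X)"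
  have Pz: "P *v z = \<alpha> *\<^sub>R v + \<beta> *\<^sub>R X"
    by (simp add: z_def matrix_vector_right_distrib matrix_vector_mult_scaleR PQ)
  have "gform B (P *v z) (P *v z) = \<alpha>\<^sup>2 * gform B v v + \<beta>\<^sup>2 * gform B X X"
    unfolding Pz using orth gform_commute[OF sym, of X v]
    by (simp add: gform_linear power2_eq_square algebra_simps)
  also have "\<dots> < 0"
    using ab vneg X by (auto simp: add_neg_nonpos add_nonpos_neg mult_nonneg_nonpos mult_pos_neg)
  finally have neg: "gform B (P *v z) (P *v z) < 0" .
  have "gform B (P *v z) (P *v z) = (\<Sum>i\<in>UNIV. (if i = i0 then -1 else 1) * (z $ i)\<^sup>2)"
    using gform_congruence[of P B z] D gform_diagonal[of "\<lambda>i. if i = i0 then -1 else 1" z] by simp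
  also have "\<dots> = (\<Sum>i\<in>UNIV. (if i = i0 then 0 else 1) * (z $ i)\<^sup>2)"
    by (rule sum.cong) (auto simp: z_def z0)
  also have "\<dots> \<ge> 0" by (rule sum_nonneg) auto
  finally show False using neg by simp
qed

definition future_timelike :: "real^'n^'n \<Rightarrow> real^'n \<Rightarrow> real^'n \<Rightarrow> bool" where
  "future_timelike B X v \<longleftrightarrow> gform B v v < 0 \<and> gform B v X < 0"

lemma future_timelike_scaleR:
  assumes "future_timelike B X v" "c > 0"
  shows "future_timelike B X (c *\<^sub>R v)"
  using assms by (simp add: future_timelike_def gform_linear mult_pos_neg)

lemma future_timelike_gform_neg:
  fixes B :: "real^'n^'n"
  assumes L: "lorentz_sig B" and X: "gform B X X < 0"
    and w: "future_timelike B X w" and e: "future_timelike B X e"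
  shows "gform B w e < 0"
proof -
  have sym: "transpose B = B" using L by (simp add: lorentz_sig_def)
  note comm = gform_commute[OF sym]
  define q where "q = - gform B X X"
  have q: "q > 0" using X by (simp add: q_def)
  define aw where "aw = - gform B w X / q"
  define ae where "ae = - gform B e X / q"
  have aw: "aw > 0" and ae: "ae > 0"
    using w e q by (simp_all add: aw_def ae_def future_timelike_def divide_neg_pos)
  define w' where "w' = w - aw *\<^sub>R X"
  define e' where "e' = e - ae *\<^sub>R X"
  have w'X: "gform B w' X = 0" and e'X: "gform B e' X = 0"
    using q by (simp_all add: w'_def e'_def aw_def ae_def gform_linear q_def)
  have ww: "gform B w w = gform B w' w' - aw\<^sup>2 * q"
    unfolding w'_def using w'X comm[of X w'] by (simp add: w'_def gform_linear q_def power2_eq_square algebra_simps)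
  have ee: "gform B e e = gform B e' e' - ae\<^sup>2 * q"
    unfolding e'_def using e'X comm[of X e'] by (simp add: e'_def gform_linear q_def power2_eq_square algebra_simps)
  have we: "gform B w e = gform B w' e' - aw * ae * q"
    using w'X e'X comm[of X e'] comm[of X w'] by (simp add: w'_def e'_def gform_linear q_def algebra_simps)
  \<comment> \<open>the orthogonal combination ae w' - aw e' is spacelike, which bounds gform B w' e'\<close>
  have "gform B (ae *\<^sub>R w' - aw *\<^sub>R e') X = 0" using w'X e'X by (simp add: gform_linear)
  hence "0 \<le> gform B (ae *\<^sub>R w' - aw *\<^sub>R e') (ae *\<^sub>R w' - aw *\<^sub>R e')"
    by (rule lorentz_orthogonal_timelike_nonneg[OF L X])
  also have "\<dots> = ae\<^sup>2 * gform B w' w' - 2 * aw * ae * gform B w' e' + aw\<^sup>2 * gform B e' e'"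
    using comm[of e' w'] by (simp add: gform_linear power2_eq_square algebra_simps)
  finally have "2 * aw * ae * gform B w' e' \<le> ae\<^sup>2 * gform B w' w' + aw\<^sup>2 * gform B e' e'" by simp
  also have "\<dots> < ae\<^sup>2 * (aw\<^sup>2 * q) + aw\<^sup>2 * (ae\<^sup>2 * q)"
    using w e ww ee aw ae by (intro add_strict_mono mult_strict_left_mono) (auto simp: future_timelike_def)
  also have "\<dots> = (2 * aw * ae) * (aw * ae * q)" by (simp add: power2_eq_square)
  finally have "gform B w' e' < aw * ae * q" using aw ae by simp
  thus ?thesis using we by simp
qed

lemma future_timelike_add_scaleR:
  fixes B :: "real^'n^'n"
  assumes L: "lorentz_sig B" and X: "gform B X X < 0"
    and w: "future_timelike B X w" and e: "future_timelike B X e" and \<alpha>: "\<alpha> \<ge> 0"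
  shows "future_timelike B X (w + \<alpha> *\<^sub>R e)"
proof -
  have sym: "transpose B = B" using L by (simp add: lorentz_sig_def)
  have we: "gform B w e < 0" by (rule future_timelike_gform_neg[OF L X w e])
  have "gform B (w + \<alpha> *\<^sub>R e) (w + \<alpha> *\<^sub>R e) = gform B w w + 2 * \<alpha> * gform B w e + \<alpha>\<^sup>2 * gform B e e"
    using gform_commute[OF sym, of e w] by (simp add: gform_linear power2_eq_square algebra_simps)
  also have "\<dots> < 0"
    using w e we \<alpha> by (auto simp: future_timelike_def add_neg_nonpos mult_nonneg_nonpos)
  finally show ?thesis
    using w e \<alpha> by (simp add: future_timelike_def gform_linear add_neg_nonpos mult_nonneg_nonpos)
qed

lemma bounded_bilinear_matrix_vector_mult: "bounded_bilinear (\<lambda>(A::real^'n^'m) x. A *v x)"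
  unfolding bilinear_conv_bounded_bilinear[symmetric] bilinear_def
  by (auto intro!: linearI simp: matrix_vector_mult_add_rdistrib matrix_vector_right_distrib
      scaleR_matrix_vector_assoc matrix_vector_mult_scaleR)

lemma continuous_on_matrix_vector_mult [continuous_intros]:
  "continuous_on S f \<Longrightarrow> continuous_on S g \<Longrightarrow> continuous_on S (\<lambda>x. (f x :: real^'n^'m) *v g x)"
  using bounded_bilinear.continuous_on[OF bounded_bilinear_matrix_vector_mult] by blast

lemma continuous_on_gform [continuous_intros]:
  "continuous_on S f \<Longrightarrow> continuous_on S g \<Longrightarrow> continuous_on S h \<Longrightarrow>
   continuous_on S (\<lambda>x. gform (f x) (g x) (h x))"
  unfolding gform_def by (intro continuous_intros)

lemma open_future_timelike_pairs:
  fixes Gc :: "real^'n \<Rightarrow> real^'n^'n" and Xc :: "real^'n \<Rightarrow> real^'n"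
  assumes "open Om" "continuous_on Om Gc" "continuous_on Om Xc"
  shows "open {(y, u). y \<in> Om \<and> future_timelike (Gc y) (Xc y) u}"
proof -
  have Om: "open (Om \<times> UNIV)" "fst ` (Om \<times> UNIV) \<subseteq> Om" using assms(1) by (auto simp: open_Times)
  have cG: "continuous_on (Om \<times> UNIV) (\<lambda>p. Gc (fst p))" and cX: "continuous_on (Om \<times> UNIV) (\<lambda>p. Xc (fst p))"
    by (intro continuous_on_compose2[OF assms(2)] continuous_on_compose2[OF assms(3)]
        continuous_intros Om(2))+
  have "open ((Om \<times> UNIV) \<inter> (\<lambda>p. gform (Gc (fst p)) (snd p) (snd p)) -` {..<0})"
    "open ((Om \<times> UNIV) \<inter> (\<lambda>p. gform (Gc (fst p)) (snd p) (Xc (fst p))) -` {..<0})"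
    by (intro continuous_open_preimage Om(1) continuous_intros cG cX open_lessThan)+
  from open_Int[OF this]
  show ?thesis by (rule back_subst) (auto simp: future_timelike_def)
qed

lemma future_timelike_stable:
  fixes Gc :: "real^'n \<Rightarrow> real^'n^'n" and Xc :: "real^'n \<Rightarrow> real^'n"
  assumes Om: "open Om" "a \<in> Om" and cG: "continuous_on Om Gc" and cX: "continuous_on Om Xc"
    and e0: "future_timelike (Gc a) (Xc a) e0"
  obtains \<epsilon> where "\<epsilon> > 0" "cball a \<epsilon> \<subseteq> Om"
    "\<And>y u. dist y a < \<epsilon> \<Longrightarrow> dist u e0 < \<epsilon> \<Longrightarrow> future_timelike (Gc y) (Xc y) u"
proof -
  define W where "W = {(y, u). y \<in> Om \<and> future_timelike (Gc y) (Xc y) u}"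
  have "open W" unfolding W_def by (rule open_future_timelike_pairs[OF Om(1) cG cX])
  moreover have "(a, e0) \<in> W" using Om e0 by (simp add: W_def)
  ultimately obtain r where r: "r > 0" "ball (a, e0) r \<subseteq> W" using open_contains_ball by blast
  obtain r' where r': "r' > 0" "cball a r' \<subseteq> Om" using Om open_contains_cball by blast
  have "future_timelike (Gc y) (Xc y) u" if "dist y a < min (r/2) r'" "dist u e0 < min (r/2) r'" for y u
  proof -
    have "dist (y, u) (a, e0) \<le> \<bar>dist y a\<bar> + \<bar>dist u e0\<bar>"
      unfolding dist_Pair_Pair by (rule sqrt_sum_squares_le_sum_abs)
    also have "\<dots> < r" using that by simp
    finally have "(y, u) \<in> W" using r by (auto simp: dist_commute)
    thus ?thesis by (simp add: W_def)
  qed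
  moreover have "cball a (min (r/2) r') \<subseteq> Om" using subset_cball[of "min (r/2) r'" r' a] r' by simp
  ultimately show ?thesis using that[of "min (r/2) r'"] r r' by simp
qed

lemma has_real_derivative_max0_power2:
  "((\<lambda>u::real. (max 0 u)\<^sup>2) has_real_derivative 2 * max 0 u) (at u)"
proof -
  consider "u < 0" | "u > 0" | "u = 0" by linarith
  thus ?thesis
  proof cases
    case 1
    have "((\<lambda>u::real. 0) has_real_derivative 2 * max 0 u) (at u)" using 1 by simp
    thus ?thesis by (rule has_field_derivative_transform_within_open[where S="{..<0}"]) (use 1 in auto)
  next
    case 2
    have "((\<lambda>u::real. u\<^sup>2) has_real_derivative 2 * max 0 u) (at u)"
      using 2 by (auto intro!: derivative_eq_intros)
    thus ?thesis by (rule has_field_derivative_transform_within_open[where S="{0<..}"]) (use 2 in auto)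
  next
    case 3
    have "((\<lambda>y. (max 0 y)\<^sup>2 / y) \<longlongrightarrow> 0) (at (0::real))"
    proof (rule Lim_null_comparison)
      show "\<forall>\<^sub>F y in at 0. norm ((max 0 y)\<^sup>2 / y) \<le> \<bar>y\<bar>"
        by (intro always_eventually allI) (auto simp: power2_eq_square abs_mult max_def)
      show "((\<lambda>y::real. \<bar>y\<bar>) \<longlongrightarrow> 0) (at 0)"
        using tendsto_rabs_zero[OF tendsto_ident_at[of 0 UNIV]] by simp
    qed
    thus ?thesis using 3 by (simp add: has_field_derivative_iff)
  qed
qed

lemma has_vector_derivative_deformation:
  assumes "(h has_vector_derivative h') (at s within T)" "\<tau> > 0"
  shows "((\<lambda>s. h s - (max 0 (1 - s/\<tau>))\<^sup>2 *\<^sub>R e) has_vector_derivative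
           h' + (2 * max 0 (1 - s/\<tau>) / \<tau>) *\<^sub>R e) (at s within T)"
proof -
  have "((\<lambda>s. 1 - s/\<tau>) has_real_derivative - 1/\<tau>) (at s within T)"
    using assms(2) by (auto intro!: derivative_eq_intros)
  from DERIV_chain2[OF has_real_derivative_max0_power2 this]
  have "((\<lambda>s. (max 0 (1 - s/\<tau>))\<^sup>2) has_real_derivative - (2 * max 0 (1 - s/\<tau>) / \<tau>)) (at s within T)"
    by simp
  from has_vector_derivative_diff[OF assms(1) has_vector_derivative_scaleR[OF this has_vector_derivative_const]]
  show ?thesis by simp
qed

lemma future_timelike_uniform_radius:
  fixes Gc :: "real^'n \<Rightarrow> real^'n^'n" and Xc :: "real^'n \<Rightarrow> real^'n"
  assumes "open Om" "continuous_on Om Gc" "continuous_on Om Xc" "compact K"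
    and K: "\<And>y u. (y, u) \<in> K \<Longrightarrow> y \<in> Om \<and> future_timelike (Gc y) (Xc y) u"
  obtains \<rho> where "\<rho> > 0" "\<And>y u y'. (y, u) \<in> K \<Longrightarrow> dist y' y < \<rho> \<Longrightarrow> future_timelike (Gc y') (Xc y') u"
proof -
  define W where "W = {(y, u). y \<in> Om \<and> future_timelike (Gc y) (Xc y) u}"
  have "open W" unfolding W_def by (rule open_future_timelike_pairs[OF assms(1-3)])
  moreover have "K \<subseteq> \<Union>{W}" using K by (auto simp: W_def)
  ultimately obtain \<rho> where \<rho>: "\<rho> > 0" "\<And>z. z \<in> K \<Longrightarrow> \<exists>W'\<in>{W}. ball z \<rho> \<subseteq> W'"
    using Heine_Borel_lemma[OF assms(4)] by (metis singletonD)
  have "future_timelike (Gc y') (Xc y') u" if "(y, u) \<in> K" "dist y' y < \<rho>" for y u y'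
  proof -
    have "(y', u) \<in> ball (y, u) \<rho>" using that by (simp add: dist_Pair_Pair dist_commute)
    thus ?thesis using \<rho>(2)[OF that(1)] by (auto simp: W_def)
  qed
  with \<rho>(1) show ?thesis using that by blast
qed

lemma future_timelike_add_dominant:
  assumes stab: "\<And>u. dist u e0 < \<epsilon> \<Longrightarrow> future_timelike B Xv u"
    and "\<delta> > 0" "\<alpha> > 0" "dist ((1/\<delta>) *\<^sub>R e) e0 < \<epsilon>/2" "norm w \<le> \<alpha> * \<delta> * \<epsilon> / 2"
  shows "future_timelike B Xv (w + \<alpha> *\<^sub>R e)"
proof -
  define u where "u = (1/\<delta>) *\<^sub>R e + (1 / (\<alpha> * \<delta>)) *\<^sub>R w"
  have "dist u e0 \<le> dist ((1/\<delta>) *\<^sub>R e) e0 + norm ((1 / (\<alpha> * \<delta>)) *\<^sub>R w)"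
    unfolding u_def dist_norm by (metis add.commute add_diff_eq norm_triangle_ineq)
  also have "norm ((1 / (\<alpha> * \<delta>)) *\<^sub>R w) \<le> \<epsilon> / 2"
    using assms(2,3,5) by (simp add: field_simps)
  finally have "dist u e0 < \<epsilon>" using assms(4) by linarith
  hence "future_timelike B Xv ((\<alpha> * \<delta>) *\<^sub>R u)"
    using assms(2,3) by (intro future_timelike_scaleR stab) auto
  moreover have "(\<alpha> * \<delta>) *\<^sub>R u = w + \<alpha> *\<^sub>R e"
    using assms(2,3) by (simp add: u_def scaleR_add_right)
  ultimately show ?thesis by simp
qed

text \<open>Where 1 - s/\<tau> is small the base point barely moves and the velocity w s stays future
  timelike, so adding a future timelike multiple of e keeps it so (convexity of the cone);
  elsewhere the added velocity 2 (1 - s/\<tau>)/\<tau> e dominates w s, and e is close to a multiple of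
  the future timelike vector e0.\<close>

lemma future_timelike_deformation:
  fixes Gc :: "real^'n \<Rightarrow> real^'n^'n" and Xc :: "real^'n \<Rightarrow> real^'n" and bt w :: "real \<Rightarrow> real^'n"
  assumes Om: "open Om" and LX: "\<And>y. y \<in> Om \<Longrightarrow> lorentz_sig (Gc y) \<and> gform (Gc y) (Xc y) (Xc y) < 0"
    and cG: "continuous_on Om Gc" and cX: "continuous_on Om Xc"
    and \<epsilon>: "\<epsilon> > 0" "cball a \<epsilon> \<subseteq> Om"
    and stab: "\<And>y u. dist y a < \<epsilon> \<Longrightarrow> dist u e0 < \<epsilon> \<Longrightarrow> future_timelike (Gc y) (Xc y) u"
    and \<delta>: "\<delta> > 0" "dist ((1/\<delta>) *\<^sub>R e) e0 < \<epsilon>/2" and e: "norm e < \<epsilon>/2"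
    and \<tau>0: "\<tau>0 > 0"
    and cb: "continuous_on {0..\<tau>0} bt" and cw: "continuous_on {0..\<tau>0} w"
    and near: "\<And>s. s \<in> {0..\<tau>0} \<Longrightarrow> dist (bt s) (a + e) < \<epsilon>/2"
    and tw: "\<And>s. s \<in> {0..\<tau>0} \<Longrightarrow> future_timelike (Gc (bt s)) (Xc (bt s)) (w s)"
  obtains \<tau> where "0 < \<tau>" "\<tau> < \<tau>0"
    "\<And>s. s \<in> {0..\<tau>} \<Longrightarrow> dist (bt s - (1 - s/\<tau>)\<^sup>2 *\<^sub>R e) a < \<epsilon> \<and>
       future_timelike (Gc (bt s - (1 - s/\<tau>)\<^sup>2 *\<^sub>R e)) (Xc (bt s - (1 - s/\<tau>)\<^sup>2 *\<^sub>R e))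
         (w s + (2 * (1 - s/\<tau>) / \<tau>) *\<^sub>R e)"
proof -
  have bt_Om: "bt s \<in> Om" if "s \<in> {0..\<tau>0}" for s
  proof -
    have "dist (bt s) a < \<epsilon>"
      using dist_triangle[of "bt s" a "a + e"] near[OF that] e by (simp add: dist_norm)
    hence "bt s \<in> cball a \<epsilon>" by (simp add: dist_commute)
    thus ?thesis using \<epsilon>(2) by blast
  qed
  have C: "compact ((\<lambda>s. (bt s, w s)) ` {0..\<tau>0})"
    by (intro compact_continuous_image continuous_on_Pair cb cw compact_Icc)
  have "y \<in> Om \<and> future_timelike (Gc y) (Xc y) u" if "(y, u) \<in> (\<lambda>s. (bt s, w s)) ` {0..\<tau>0}" for y u
    using that bt_Om tw by blast
  then obtain \<rho> where \<rho>: "\<rho> > 0" and \<rho>0: "\<And>y u y'. (y, u) \<in> (\<lambda>s. (bt s, w s)) ` {0..\<tau>0} \<Longrightarrow>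
      dist y' y < \<rho> \<Longrightarrow> future_timelike (Gc y') (Xc y') u"
    using future_timelike_uniform_radius[OF Om cG cX C] by blast
  have \<rho>_stab: "future_timelike (Gc y) (Xc y) (w s)" if "s \<in> {0..\<tau>0}" "dist y (bt s) < \<rho>" for s y
    using \<rho>0[of "bt s" "w s" y] that by blast
  obtain K where K: "K > 0" "\<And>s. s \<in> {0..\<tau>0} \<Longrightarrow> norm (w s) \<le> K"
    using compact_imp_bounded[OF compact_continuous_image[OF cw compact_Icc]] by (auto simp: bounded_pos)
  define \<theta> where "\<theta> = min 1 (\<rho> / (norm e + 1))"
  have \<theta>: "\<theta> > 0" "\<theta> * norm e < \<rho>"
  proof -
    show "\<theta> > 0" using \<rho> by (simp add: \<theta>_def add_nonneg_pos)
    have "\<theta> * norm e \<le> \<rho> / (norm e + 1) * norm e"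
      by (intro mult_right_mono) (auto simp: \<theta>_def)
    also have "\<dots> < \<rho>"
      using \<rho> add_pos_nonneg[OF zero_less_one norm_ge_zero, of e] by (simp add: pos_divide_less_eq)
    finally show "\<theta> * norm e < \<rho>" .
  qed
  define \<tau> where "\<tau> = min (\<tau>0/2) (\<epsilon> * \<theta> * \<delta> / K)"
  have \<tau>: "\<tau> > 0" "\<tau> < \<tau>0" "K * \<tau> \<le> \<epsilon> * \<theta> * \<delta>"
  proof -
    show "\<tau> > 0" "\<tau> < \<tau>0" using \<tau>0 \<epsilon> \<theta> \<delta> K by (auto simp: \<tau>_def)
    have "\<tau> \<le> \<epsilon> * \<theta> * \<delta> / K" by (simp add: \<tau>_def)
    thus "K * \<tau> \<le> \<epsilon> * \<theta> * \<delta>" using K by (simp add: field_simps)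
  qed
  have "dist (bt s - k\<^sup>2 *\<^sub>R e) a < \<epsilon> \<and>
        future_timelike (Gc (bt s - k\<^sup>2 *\<^sub>R e)) (Xc (bt s - k\<^sup>2 *\<^sub>R e)) (w s + (2 * k / \<tau>) *\<^sub>R e)"
    if s: "s \<in> {0..\<tau>}" and k_def: "k = 1 - s/\<tau>" for s k
  proof -
    have k: "0 \<le> k" "k \<le> 1" using s \<tau> by (auto simp: k_def field_simps)
    have k2: "k\<^sup>2 \<le> 1" "k\<^sup>2 \<le> k" using k by (auto simp: power2_eq_square mult_le_one mult_left_le_one_le)
    have s0: "s \<in> {0..\<tau>0}" using s \<tau> by auto
    define y where "y = bt s - k\<^sup>2 *\<^sub>R e"
    have "dist y a \<le> dist (bt s) (a + e) + norm ((1 - k\<^sup>2) *\<^sub>R e)"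
      unfolding y_def dist_norm by (rule order_trans[OF _ norm_triangle_ineq]) (simp add: algebra_simps)
    also have "norm ((1 - k\<^sup>2) *\<^sub>R e) \<le> norm e" using k k2 by (simp add: mult_left_le_one_le)
    finally have dy: "dist y a < \<epsilon>" using near[OF s0] e by simp
    have "future_timelike (Gc y) (Xc y) (w s + (2 * k / \<tau>) *\<^sub>R e)"
    proof (cases "k < \<theta>")
      case True
      have Ly: "lorentz_sig (Gc y)" "gform (Gc y) (Xc y) (Xc y) < 0"
        using LX \<epsilon>(2) dy by (auto simp: dist_commute subset_iff)
      have "dist ((1/\<delta>) *\<^sub>R e) e0 < \<epsilon>" using \<delta>(2) \<epsilon>(1) by linarith
      from future_timelike_scaleR[OF stab[OF dy this] \<delta>(1)]
      have e_future: "future_timelike (Gc y) (Xc y) e" using \<delta>(1) by simp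
      have "dist y (bt s) = k\<^sup>2 * norm e" using k by (simp add: y_def dist_norm)
      also have "\<dots> \<le> \<theta> * norm e" using k2 True by (intro mult_right_mono) auto
      finally have "future_timelike (Gc y) (Xc y) (w s)" using \<theta> \<rho>_stab[OF s0] by simp
      thus ?thesis using future_timelike_add_scaleR[OF Ly _ e_future] k \<tau> by simp
    next
      case False
      have "norm (w s) * \<tau> \<le> \<epsilon> * \<theta> * \<delta>"
        using mult_right_mono[OF K(2)[OF s0] less_imp_le[OF \<tau>(1)]] \<tau>(3) by linarith
      hence "norm (w s) \<le> \<epsilon> * \<theta> * \<delta> / \<tau>" using \<tau>(1) by (simp add: field_simps)
      also have "\<dots> \<le> (2 * k / \<tau>) * \<delta> * \<epsilon> / 2"
        using False \<epsilon> \<delta> \<tau> by (simp add: field_simps mult_right_mono)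
      finally show ?thesis
        using False \<theta> \<tau> \<delta> by (intro future_timelike_add_dominant[OF stab[OF dy] \<delta>(1) _ \<delta>(2)]) auto
    qed
    thus ?thesis using dy by (simp add: y_def)
  qed
  thus ?thesis using that \<tau> by blast
qed

lemma smooth_on_set_continuous_on: "smooth_on_set S f \<Longrightarrow> continuous_on S f"
  using Ck.simps(1) smooth_on_set_def by blast

lemma smooth_on_set_C1:
  assumes "smooth_on_set S f"
  shows "f differentiable_on S" "continuous_on S (\<lambda>x. frechet_derivative f (at x) (axis i 1))"
proof -
  have "Ck (Suc 0) S f" using assms unfolding smooth_on_set_def by blast
  thus "f differentiable_on S" "continuous_on S (\<lambda>x. frechet_derivative f (at x) (axis i 1))"
    by simp_all
qed

lemma at_within_Int_open: "x \<in> T \<Longrightarrow> open T \<Longrightarrow> at x within (S \<inter> T) = at x within S"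
  by (rule at_within_nhd[of x T]) auto

lemma continuous_on_initially_in_open:
  fixes g :: "real \<Rightarrow> 'a::topological_space"
  assumes g: "continuous_on {0..1} g" and W: "open W" "g 0 \<in> W"
  obtains \<tau>0 where "0 < \<tau>0" "\<tau>0 < 1" "g ` {0..\<tau>0} \<subseteq> W"
proof -
  have "openin (top_of_set {0..1}) ({0..1} \<inter> g -` W)"
    by (rule continuous_openin_preimage[OF g, where T=UNIV]) (use W in auto)
  moreover have "0 \<in> {0..1} \<inter> g -` W" using W by simp
  ultimately obtain d where d: "d > 0" "ball 0 d \<inter> {0..1} \<subseteq> {0..1} \<inter> g -` W"
    unfolding openin_contains_ball by blast
  have "g ` {0..min (d/2) (1/2)} \<subseteq> W"
  proof clarify
    fix s :: real assume "s \<in> {0..min (d/2) (1/2)}"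
    hence "s \<in> ball 0 d \<inter> {0..1}" using d by (auto simp: dist_real_def)
    thus "g s \<in> W" using d by blast
  qed
  thus ?thesis using that[of "min (d/2) (1/2)"] d by simp
qed

lemma has_vector_derivative_glue:
  fixes f F H :: "real \<Rightarrow> 'a::real_normed_vector"
  assumes S: "openin (top_of_set {0..1}) S" and \<tau>: "0 \<le> \<tau>" "\<tau> < \<tau>0" "\<tau>0 \<le> 1"
    and F: "\<And>t. t \<in> S \<Longrightarrow> t < \<tau>0 \<Longrightarrow> (f has_vector_derivative F t) (at t within S)"
      "continuous_on (S \<inter> {..<\<tau>0}) F"
    and H: "\<And>t. t \<in> S \<Longrightarrow> \<tau> < t \<Longrightarrow> (f has_vector_derivative H t) (at t within S)"
      "continuous_on (S \<inter> {\<tau><..}) H"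
  shows "continuous_on S (\<lambda>t. if t \<le> \<tau> then F t else H t)"
    "\<And>t. t \<in> S \<Longrightarrow> (f has_vector_derivative (if t \<le> \<tau> then F t else H t)) (at t within S)"
proof -
  obtain T where T: "open T" "S = T \<inter> {0..1}" using S by (auto simp: openin_open)
  \<comment> \<open>on the overlap S is a neighbourhood of t, so the two derivatives coincide\<close>
  have FH: "F t = H t" if t: "t \<in> S" "\<tau> < t" "t < \<tau>0" for t
  proof -
    have "at t within S = at t"
      by (rule at_within_open_subset[of t "T \<inter> {0<..<1}"]) (use t \<tau> T in auto)
    thus ?thesis using F(1)[OF t(1,3)] H(1)[OF t(1,2)] by (metis vector_derivative_unique_at)
  qed
  have SS: "S \<inter> {..<\<tau>0} \<union> S \<inter> {\<tau><..} = S" using \<tau> by auto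
  have "continuous_on (S \<inter> {..<\<tau>0} \<union> S \<inter> {\<tau><..}) (\<lambda>t. if t \<le> \<tau> then F t else H t)"
  proof (rule continuous_on_cases_local_open[OF _ _ F(2) H(2)])
    show "openin (top_of_set (S \<inter> {..<\<tau>0} \<union> S \<inter> {\<tau><..})) (S \<inter> {..<\<tau>0})"
      "openin (top_of_set (S \<inter> {..<\<tau>0} \<union> S \<inter> {\<tau><..})) (S \<inter> {\<tau><..})"
      unfolding SS by (simp_all add: openin_open_Int)
  qed (use FH in auto)
  thus "continuous_on S (\<lambda>t. if t \<le> \<tau> then F t else H t)" by (simp only: SS)
  show "(f has_vector_derivative (if t \<le> \<tau> then F t else H t)) (at t within S)" if "t \<in> S" for t
    using F(1) H(1) that \<tau> by auto
qed

lemma fut_timelike_curve_reverse: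
  assumes "fut_timelike_curve A G X \<gamma> a b"
  shows "fut_timelike_curve A G (\<lambda>c y. - X c y) (\<lambda>t. \<gamma> (1 - t)) b a"
  unfolding fut_timelike_curve_def
proof (intro conjI ballI)
  have \<gamma>: "continuous_on {0..1} \<gamma>" "\<gamma> 0 = a" "\<gamma> 1 = b"
    using assms by (simp_all add: fut_timelike_curve_def)
  show "continuous_on {0..1} (\<lambda>t. \<gamma> (1 - t))"
    by (rule continuous_on_compose2[OF \<gamma>(1)]) (auto intro!: continuous_intros)
  show "\<gamma> (1 - 0) = b" "\<gamma> (1 - 1) = a" using \<gamma> by simp_all
  fix c assume c: "c \<in> A"
  define S where "S = {t\<in>{0..1}. \<gamma> t \<in> fst c}"
  define R where "R = {t\<in>{0..1}. \<gamma> (1 - t) \<in> fst c}"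
  obtain g where g: "continuous_on S g" and gd: "\<And>t. t \<in> S \<Longrightarrow>
      ((snd c \<circ> \<gamma>) has_vector_derivative g t) (at t within S) \<and>
      gform (G c (snd c (\<gamma> t))) (g t) (g t) < 0 \<and> gform (G c (snd c (\<gamma> t))) (g t) (X c (snd c (\<gamma> t))) < 0"
    using assms c unfolding fut_timelike_curve_def S_def by blast
  have RS: "(\<lambda>t. 1 - t) ` R = S"
  proof
    show "(\<lambda>t. 1 - t) ` R \<subseteq> S" by (auto simp: R_def S_def)
    show "S \<subseteq> (\<lambda>t. 1 - t) ` R"
    proof
      fix x assume "x \<in> S"
      thus "x \<in> (\<lambda>t. 1 - t) ` R" by (intro image_eqI[of x _ "1 - x"]) (auto simp: R_def S_def)
    qed
  qed
  have "continuous_on R (\<lambda>t. - g (1 - t))"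
    by (intro continuous_intros continuous_on_compose2[OF g]) (use RS in auto)
  moreover have "((snd c \<circ> (\<lambda>t. \<gamma> (1 - t))) has_vector_derivative - g (1 - t)) (at t within R)
      \<and> gform (G c (snd c (\<gamma> (1 - t)))) (- g (1 - t)) (- g (1 - t)) < 0
      \<and> gform (G c (snd c (\<gamma> (1 - t)))) (- g (1 - t)) (- X c (snd c (\<gamma> (1 - t)))) < 0"
    if t: "t \<in> R" for t
  proof -
    have "1 - t \<in> S" using RS t by blast
    have "((\<lambda>t. 1 - t) has_vector_derivative -1) (at t within R)"
      by (auto intro!: derivative_eq_intros simp: has_real_derivative_iff_has_vector_derivative[symmetric])
    from vector_diff_chain_within[OF this, of "snd c \<circ> \<gamma>" "g (1 - t)"]
    have "((snd c \<circ> (\<lambda>t. \<gamma> (1 - t))) has_vector_derivative - g (1 - t)) (at t within R)"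
      using gd[OF \<open>1 - t \<in> S\<close>] RS by (simp add: o_def)
    thus ?thesis using gd[OF \<open>1 - t \<in> S\<close>] by (simp add: gform_linear)
  qed
  ultimately show "\<exists>\<gamma>'. continuous_on {t\<in>{0..1}. \<gamma> (1 - t) \<in> fst c} \<gamma>' \<and>
      (\<forall>t\<in>{t\<in>{0..1}. \<gamma> (1 - t) \<in> fst c}.
        ((snd c \<circ> (\<lambda>t. \<gamma> (1 - t))) has_vector_derivative \<gamma>' t) (at t within {t\<in>{0..1}. \<gamma> (1 - t) \<in> fst c}) \<and>
        gform (G c (snd c (\<gamma> (1 - t)))) (\<gamma>' t) (\<gamma>' t) < 0 \<and>
        gform (G c (snd c (\<gamma> (1 - t)))) (\<gamma>' t) (- X c (snd c (\<gamma> (1 - t)))) < 0)"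
    unfolding R_def by blast
qed

lemma chron_reverse: "chron A G (\<lambda>c y. - X c y) a b \<longleftrightarrow> chron A G X b a"
  using fut_timelike_curve_reverse[of A G X _ b a] fut_timelike_curve_reverse[of A G "\<lambda>c y. - X c y" _ a b]
  by (auto simp: chron_def)

lemma Ifut_eq_Ipast_reverse: "Ifut A G X x = Ipast A G (\<lambda>c y. - X c y) x"
  by (simp add: Ifut_def Ipast_def chron_reverse)

lemma open_not_subset_closure:
  assumes "open D" "interior (closure P) \<subseteq> P" "\<not> D \<subseteq> P"
  shows "\<not> D \<subseteq> closure P"
  using assms interior_maximal by blast

lemma has_vector_derivative_localize:
  assumes "(f has_vector_derivative f') (at t within T)" "S \<inter> U \<subseteq> T"
    "\<And>s. s \<in> S \<inter> U \<Longrightarrow> h s = f s" "t \<in> S" "t \<in> U" "open U"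
  shows "(h has_vector_derivative f') (at t within S)"
proof -
  have "(f has_vector_derivative f') (at t within S \<inter> U)"
    using assms(1,2) by (rule has_vector_derivative_within_subset)
  hence "(h has_vector_derivative f') (at t within S \<inter> U)"
    by (rule has_vector_derivative_transform_within[OF _ zero_less_one]) (use assms(3-5) in auto)
  thus ?thesis using assms(5,6) by (simp add: at_within_Int_open)
qed

lemma fut_timelike_curve_chartE:
  assumes "fut_timelike_curve A G X \<gamma> a b" "c \<in> A"
  obtains \<gamma>' where "continuous_on {t\<in>{0..1}. \<gamma> t \<in> fst c} \<gamma>'"
    "\<And>t. t \<in> {t\<in>{0..1}. \<gamma> t \<in> fst c} \<Longrightarrow>
       ((snd c \<circ> \<gamma>) has_vector_derivative \<gamma>' t) (at t within {t\<in>{0..1}. \<gamma> t \<in> fst c}) \<and>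
       future_timelike (G c (snd c (\<gamma> t))) (X c (snd c (\<gamma> t))) (\<gamma>' t)"
  using assms unfolding fut_timelike_curve_def future_timelike_def by blast

lemma fut_timelike_curveI:
  assumes "continuous_on {0..1} \<gamma>" "\<gamma> 0 = a" "\<gamma> 1 = b"
    and "\<And>c. c \<in> A \<Longrightarrow> \<exists>\<gamma>'. continuous_on {t\<in>{0..1}. \<gamma> t \<in> fst c} \<gamma>' \<and>
       (\<forall>t\<in>{t\<in>{0..1}. \<gamma> t \<in> fst c}.
         ((snd c \<circ> \<gamma>) has_vector_derivative \<gamma>' t) (at t within {t\<in>{0..1}. \<gamma> t \<in> fst c}) \<and>
         future_timelike (G c (snd c (\<gamma> t))) (X c (snd c (\<gamma> t))) (\<gamma>' t))"
  shows "fut_timelike_curve A G X \<gamma> a b"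
  using assms unfolding fut_timelike_curve_def future_timelike_def by blast

locale spacetime =
  fixes A :: "('m::topological_space, 'n::finite) chart set"
    and G :: "('m, 'n) chart \<Rightarrow> real^'n \<Rightarrow> real^'n^'n"
    and X :: "('m, 'n) chart \<Rightarrow> real^'n \<Rightarrow> real^'n"
  assumes time_oriented_lorentzian: "time_oriented_lorentzian A G X"
begin

lemma smooth_atlas: "smooth_atlas A"
  using time_oriented_lorentzian unfolding time_oriented_lorentzian_def by (elim conjE) assumption

lemma metric_chart: "\<forall>c\<in>A. smooth_on_set (snd c ` fst c) (G c) \<and> (\<forall>y\<in>snd c ` fst c. lorentz_sig (G c y))"
  using time_oriented_lorentzian unfolding time_oriented_lorentzian_def by (elim conjE) assumption

lemma metric_transition_all: "\<forall>c1\<in>A. \<forall>c2\<in>A. \<forall>p\<in>fst c1 \<inter> fst c2. \<forall>u v.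
      gform (G c1 (snd c1 p)) u v =
      gform (G c2 (snd c2 p)) (frechet_derivative (transition c1 c2) (at (snd c1 p)) u)
                              (frechet_derivative (transition c1 c2) (at (snd c1 p)) v)"
  using time_oriented_lorentzian unfolding time_oriented_lorentzian_def by (elim conjE) assumption

lemma time_orientation_chart: "\<forall>c\<in>A. continuous_on (snd c ` fst c) (X c) \<and>
      (\<forall>y\<in>snd c ` fst c. gform (G c y) (X c y) (X c y) < 0)"
  using time_oriented_lorentzian unfolding time_oriented_lorentzian_def by (elim conjE) assumption

lemma time_orientation_transition_all: "\<forall>c1\<in>A. \<forall>c2\<in>A. \<forall>p\<in>fst c1 \<inter> fst c2.
      X c2 (snd c2 p) = frechet_derivative (transition c1 c2) (at (snd c1 p)) (X c1 (snd c1 p))"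
  using time_oriented_lorentzian unfolding time_oriented_lorentzian_def by (elim conjE) assumption

lemma charts_are_charts: "\<forall>c\<in>A. is_chart c"
  using smooth_atlas unfolding smooth_atlas_def by (elim conjE) assumption

lemma charts_cover_UNIV: "(\<Union>c\<in>A. fst c) = UNIV"
  using smooth_atlas unfolding smooth_atlas_def by (elim conjE) assumption

lemma transitions_smooth: "\<forall>c1\<in>A. \<forall>c2\<in>A. smooth_on_set (snd c1 ` (fst c1 \<inter> fst c2)) (transition c1 c2)"
  using smooth_atlas unfolding smooth_atlas_def by (elim conjE) assumption

lemma charts_cover: "\<exists>c\<in>A. p \<in> fst c"
  using charts_cover_UNIV by blast

lemma
  assumes "c \<in> A"
  shows chart_open: "open (fst c)"
    and chart_image_open: "open (snd c ` fst c)"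
    and chart_homeomorphism: "homeomorphism (fst c) (snd c ` fst c) (snd c) (inv_into (fst c) (snd c))"
proof -
  have "is_chart c" using assms charts_are_charts by blast
  thus "open (fst c)" "open (snd c ` fst c)"
    "homeomorphism (fst c) (snd c ` fst c) (snd c) (inv_into (fst c) (snd c))"
    by (cases c, simp add: is_chart_def)+
qed

lemma chart_inv_into: "c \<in> A \<Longrightarrow> q \<in> fst c \<Longrightarrow> inv_into (fst c) (snd c) (snd c q) = q"
  using chart_homeomorphism by (simp add: homeomorphism_def)

lemma chart_image_Int_open:
  assumes "c \<in> A" "open U"
  shows "open (snd c ` (fst c \<inter> U))"
proof -
  have "openin (top_of_set (fst c)) (fst c \<inter> U)" using assms(2) by (rule openin_open_Int)
  from homeomorphism_imp_open_map[OF chart_homeomorphism[OF assms(1)] this]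
  show ?thesis using chart_image_open[OF assms(1)] openin_open_trans by blast
qed

lemma chart_inverse_image_open:
  assumes "c \<in> A" "open V" "V \<subseteq> snd c ` fst c"
  shows "open (inv_into (fst c) (snd c) ` V)"
proof -
  have "openin (top_of_set (snd c ` fst c)) V" using assms(3,2) by (rule open_subset)
  from homeomorphism_imp_open_map[OF homeomorphism_symD[OF chart_homeomorphism[OF assms(1)]] this]
  show ?thesis using chart_open[OF assms(1)] openin_open_trans by blast
qed

lemma
  assumes "c \<in> A"
  shows metric_continuous_on: "continuous_on (snd c ` fst c) (G c)"
    and metric_lorentz_sig: "y \<in> snd c ` fst c \<Longrightarrow> lorentz_sig (G c y)"
    and time_orientation_continuous_on: "continuous_on (snd c ` fst c) (X c)"
    and time_orientation_timelike: "y \<in> snd c ` fst c \<Longrightarrow> gform (G c y) (X c y) (X c y) < 0"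
proof -
  have "smooth_on_set (snd c ` fst c) (G c) \<and> (\<forall>y\<in>snd c ` fst c. lorentz_sig (G c y))"
    "continuous_on (snd c ` fst c) (X c) \<and> (\<forall>y\<in>snd c ` fst c. gform (G c y) (X c y) (X c y) < 0)"
    using assms metric_chart time_orientation_chart by blast+
  thus "continuous_on (snd c ` fst c) (G c)" "continuous_on (snd c ` fst c) (X c)"
    "y \<in> snd c ` fst c \<Longrightarrow> lorentz_sig (G c y)"
    "y \<in> snd c ` fst c \<Longrightarrow> gform (G c y) (X c y) (X c y) < 0"
    by (auto intro: smooth_on_set_continuous_on)
qed

lemma metric_transition:
  "c1 \<in> A \<Longrightarrow> c2 \<in> A \<Longrightarrow> p \<in> fst c1 \<inter> fst c2 \<Longrightarrow>
    gform (G c1 (snd c1 p)) u v =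
    gform (G c2 (snd c2 p)) (frechet_derivative (transition c1 c2) (at (snd c1 p)) u)
                            (frechet_derivative (transition c1 c2) (at (snd c1 p)) v)"
  using metric_transition_all by blast

lemma time_orientation_transition:
  "c1 \<in> A \<Longrightarrow> c2 \<in> A \<Longrightarrow> p \<in> fst c1 \<inter> fst c2 \<Longrightarrow>
    X c2 (snd c2 p) = frechet_derivative (transition c1 c2) (at (snd c1 p)) (X c1 (snd c1 p))"
  using time_orientation_transition_all by blast

lemma future_timelike_transition:
  assumes "c1 \<in> A" "c2 \<in> A" "p \<in> fst c1 \<inter> fst c2"
    and "future_timelike (G c1 (snd c1 p)) (X c1 (snd c1 p)) v"
  shows "future_timelike (G c2 (snd c2 p)) (X c2 (snd c2 p))
           (frechet_derivative (transition c1 c2) (at (snd c1 p)) v)"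
  using assms metric_transition[OF assms(1-3)] time_orientation_transition[OF assms(1-3)]
  by (simp add: future_timelike_def)

lemma transition_smooth: "c1 \<in> A \<Longrightarrow> c2 \<in> A \<Longrightarrow> smooth_on_set (snd c1 ` (fst c1 \<inter> fst c2)) (transition c1 c2)"
  using transitions_smooth by blast

lemma transition_has_derivative:
  assumes "c1 \<in> A" "c2 \<in> A" "y \<in> snd c1 ` (fst c1 \<inter> fst c2)"
  shows "(transition c1 c2 has_derivative frechet_derivative (transition c1 c2) (at y)) (at y)"
proof -
  have "transition c1 c2 differentiable (at y within snd c1 ` (fst c1 \<inter> fst c2))"
    using smooth_on_set_C1(1)[OF transition_smooth[OF assms(1,2)]] assms(3)
    unfolding differentiable_on_def by blast
  hence "transition c1 c2 differentiable (at y)"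
    using at_within_open[OF assms(3) chart_image_Int_open[OF assms(1) chart_open[OF assms(2)]]] by simp
  thus ?thesis using frechet_derivative_works by blast
qed

lemma has_vector_derivative_transition:
  assumes "c1 \<in> A" "c2 \<in> A" "g t \<in> snd c1 ` (fst c1 \<inter> fst c2)"
    and "(g has_vector_derivative g') (at t within T)"
  shows "((\<lambda>s. transition c1 c2 (g s)) has_vector_derivative
           frechet_derivative (transition c1 c2) (at (g t)) g') (at t within T)"
proof -
  note D = transition_has_derivative[OF assms(1-3)]
  from has_derivative_compose[OF assms(4)[unfolded has_vector_derivative_def] D]
  show ?thesis
    unfolding has_vector_derivative_def using linear_cmul[OF has_derivative_linear[OF D]] by simp
qed

lemma continuous_on_transition_derivative:
  assumes c: "c1 \<in> A" "c2 \<in> A" and g: "continuous_on T g" "g ` T \<subseteq> snd c1 ` (fst c1 \<inter> fst c2)"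
    and u: "continuous_on T u"
  shows "continuous_on T (\<lambda>t. frechet_derivative (transition c1 c2) (at (g t)) (u t))"
proof -
  let ?D = "\<lambda>y. frechet_derivative (transition c1 c2) (at y)"
  have expand: "?D (g t) (u t) = (\<Sum>i\<in>UNIV. (u t $ i) *\<^sub>R ?D (g t) (axis i 1))" if "t \<in> T" for t
  proof -
    have lin: "linear (?D (g t))"
      using has_derivative_linear[OF transition_has_derivative[OF c]] g(2) that by blast
    have "?D (g t) (u t) = ?D (g t) (\<Sum>i\<in>UNIV. (u t $ i) *\<^sub>R axis i 1)"
      using basis_expansion[of "u t"] by (simp add: scalar_mult_eq_scaleR)
    thus ?thesis by (simp add: linear_sum[OF lin] linear_cmul[OF lin])
  qed
  have "continuous_on T (\<lambda>t. \<Sum>i\<in>UNIV. (u t $ i) *\<^sub>R ?D (g t) (axis i 1))"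
    using continuous_on_compose2[OF smooth_on_set_C1(2)[OF transition_smooth[OF c]] g]
    by (intro continuous_intros u) auto
  thus ?thesis by (rule continuous_on_eq) (simp add: expand)
qed

lemma fut_timelike_curve_prepend_chart:
  assumes c: "c \<in> A" and c': "c' \<in> A" and \<tau>: "0 < \<tau>" "\<tau> < \<tau>0" "\<tau>0 < 1"
    and \<beta>: "fut_timelike_curve A G X \<beta> b x"
    and \<Gamma>c: "continuous_on {0..1} \<Gamma>" and \<Gamma>\<beta>: "\<And>s. \<tau> \<le> s \<Longrightarrow> \<Gamma> s = \<beta> s"
    and \<Gamma>_chart: "\<And>s. s \<in> {0..\<tau>0} \<Longrightarrow> \<Gamma> s \<in> fst c \<and> snd c (\<Gamma> s) = g s"
    and g: "\<And>s. s \<in> {0..\<tau>0} \<Longrightarrow> (g has_vector_derivative g' s) (at s within {0..\<tau>0})"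
    and g': "continuous_on {0..\<tau>0} g'"
    and g_future: "\<And>s. s \<in> {0..\<tau>} \<Longrightarrow> future_timelike (G c (g s)) (X c (g s)) (g' s)"
  shows "\<exists>\<gamma>'. continuous_on {t\<in>{0..1}. \<Gamma> t \<in> fst c'} \<gamma>' \<and>
    (\<forall>t\<in>{t\<in>{0..1}. \<Gamma> t \<in> fst c'}.
      ((snd c' \<circ> \<Gamma>) has_vector_derivative \<gamma>' t) (at t within {t\<in>{0..1}. \<Gamma> t \<in> fst c'}) \<and>
      future_timelike (G c' (snd c' (\<Gamma> t))) (X c' (snd c' (\<Gamma> t))) (\<gamma>' t))"
proof -
  have gc: "continuous_on {0..\<tau>0} g" using g by (rule continuous_on_vector_derivative)
  define S where "S = {t\<in>{0..1}. \<Gamma> t \<in> fst c'}"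
  define Sb where "Sb = {t\<in>{0..1}. \<beta> t \<in> fst c'}"
  obtain w where w: "continuous_on Sb w" and wd: "\<And>t. t \<in> Sb \<Longrightarrow>
      ((snd c' \<circ> \<beta>) has_vector_derivative w t) (at t within Sb) \<and>
      future_timelike (G c' (snd c' (\<beta> t))) (X c' (snd c' (\<beta> t))) (w t)"
    using fut_timelike_curve_chartE[OF \<beta> c'] unfolding Sb_def by blast
  have "openin (top_of_set {0..1}) ({0..1} \<inter> \<Gamma> -` fst c')"
    by (rule continuous_openin_preimage[OF \<Gamma>c, where T=UNIV]) (use chart_open[OF c'] in auto)
  moreover have "{0..1} \<inter> \<Gamma> -` fst c' = S" by (auto simp: S_def)
  ultimately have S: "openin (top_of_set {0..1}) S" by simp
  have S\<beta>: "S \<inter> {\<tau><..} \<subseteq> Sb" using \<Gamma>\<beta> by (auto simp: S_def Sb_def)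
  define F where "F t = frechet_derivative (transition c c') (at (g t)) (g' t)" for t
  have overlap: "g t \<in> snd c ` (fst c \<inter> fst c')" if "t \<in> S \<inter> {..<\<tau>0}" for t
    using that \<Gamma>_chart[of t] by (force simp: S_def)
  have transition_g: "(snd c' \<circ> \<Gamma>) t = transition c c' (g t)" if "t \<in> S \<inter> {..<\<tau>0}" for t
  proof -
    have "\<Gamma> t \<in> fst c" "snd c (\<Gamma> t) = g t" using that \<Gamma>_chart[of t] by (auto simp: S_def)
    thus ?thesis using chart_inv_into[OF c \<open>\<Gamma> t \<in> fst c\<close>] by (simp add: transition_def)
  qed
  have sub: "S \<inter> {..<\<tau>0} \<subseteq> {0..\<tau>0}" by (auto simp: S_def)
  have Fc: "continuous_on (S \<inter> {..<\<tau>0}) F"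
    unfolding F_def
  proof (rule continuous_on_transition_derivative[OF c c'])
    show "continuous_on (S \<inter> {..<\<tau>0}) g" "continuous_on (S \<inter> {..<\<tau>0}) g'"
      using continuous_on_subset[OF gc sub] continuous_on_subset[OF g' sub] .
    show "g ` (S \<inter> {..<\<tau>0}) \<subseteq> snd c ` (fst c \<inter> fst c')" using overlap by blast
  qed
  have Fd: "((snd c' \<circ> \<Gamma>) has_vector_derivative F t) (at t within S)" if t: "t \<in> S" "t < \<tau>0" for t
  proof -
    have "t \<in> S \<inter> {..<\<tau>0}" "t \<in> {0..\<tau>0}" using t sub by auto
    from has_vector_derivative_transition[OF c c' overlap[OF this(1)] g[OF this(2)]]
    show ?thesis unfolding F_def
      by (rule has_vector_derivative_localize[where U="{..<\<tau>0}"]) (use t sub transition_g in auto)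
  qed
  have wd': "((snd c' \<circ> \<Gamma>) has_vector_derivative w t) (at t within S)" if t: "t \<in> S" "\<tau> < t" for t
  proof -
    have "t \<in> Sb" using t S\<beta> by blast
    from wd[OF this, THEN conjunct1]
    show ?thesis by (rule has_vector_derivative_localize[where U="{\<tau><..}"]) (use t S\<beta> \<Gamma>\<beta> in auto)
  qed
  have wc: "continuous_on (S \<inter> {\<tau><..}) w" using continuous_on_subset[OF w S\<beta>] .
  note glue = has_vector_derivative_glue[OF S _ _ _ Fd Fc wd' wc]
  have "future_timelike (G c' (snd c' (\<Gamma> t))) (X c' (snd c' (\<Gamma> t))) (if t \<le> \<tau> then F t else w t)"
    if t: "t \<in> S" for t
  proof (cases "t \<le> \<tau>")
    case True
    hence t': "t \<in> {0..\<tau>0}" "t \<in> {0..\<tau>}" using t \<tau> by (auto simp: S_def)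
    have "\<Gamma> t \<in> fst c \<inter> fst c'" using t \<Gamma>_chart[OF t'(1)] by (simp add: S_def)
    from future_timelike_transition[OF c c' this] g_future[OF t'(2)]
    show ?thesis using True \<Gamma>_chart[OF t'(1)] by (simp add: F_def)
  next
    case False
    hence "t \<in> Sb" "\<Gamma> t = \<beta> t" using t S\<beta> \<Gamma>\<beta> by auto
    thus ?thesis using False wd by simp
  qed
  thus ?thesis
    using glue \<tau> unfolding S_def[symmetric] by (intro exI[of _ "\<lambda>t. if t \<le> \<tau> then F t else w t"]) auto
qed

lemma fut_timelike_curve_prepend:
  assumes c: "c \<in> A" and \<tau>: "0 < \<tau>" "\<tau> < \<tau>0" "\<tau>0 < 1"
    and \<beta>: "fut_timelike_curve A G X \<beta> b x" and \<beta>c: "\<beta> ` {0..\<tau>0} \<subseteq> fst c"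
    and g: "\<And>s. s \<in> {0..\<tau>0} \<Longrightarrow> (g has_vector_derivative g' s) (at s within {0..\<tau>0})"
    and g': "continuous_on {0..\<tau>0} g'"
    and g\<beta>: "\<And>s. s \<in> {\<tau>..\<tau>0} \<Longrightarrow> g s = snd c (\<beta> s)"
    and g_chart: "\<And>s. s \<in> {0..\<tau>} \<Longrightarrow> g s \<in> snd c ` fst c"
    and g_future: "\<And>s. s \<in> {0..\<tau>} \<Longrightarrow> future_timelike (G c (g s)) (X c (g s)) (g' s)"
  shows "fut_timelike_curve A G X (\<lambda>s. if s \<le> \<tau> then inv_into (fst c) (snd c) (g s) else \<beta> s)
           (inv_into (fst c) (snd c) (g 0)) x"
proof -
  define \<psi> where "\<psi> = inv_into (fst c) (snd c)"
  define \<Gamma> where "\<Gamma> s = (if s \<le> \<tau> then \<psi> (g s) else \<beta> s)" for s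
  have \<beta>01: "continuous_on {0..1} \<beta>" "\<beta> 1 = x" using \<beta> by (simp_all add: fut_timelike_curve_def)
  have \<Gamma>g: "g s \<in> snd c ` fst c \<and> \<Gamma> s = \<psi> (g s)" if "s \<in> {0..\<tau>0}" for s
  proof (cases "s \<le> \<tau>")
    case False
    have "\<beta> s \<in> fst c" using that \<beta>c by auto
    thus ?thesis using False that g\<beta>[of s] chart_inv_into[OF c] by (auto simp: \<Gamma>_def \<psi>_def)
  qed (use that g_chart in \<open>simp add: \<Gamma>_def\<close>)
  hence \<Gamma>_chart: "\<Gamma> s \<in> fst c \<and> snd c (\<Gamma> s) = g s" if "s \<in> {0..\<tau>0}" for s
    using that by (auto simp: \<psi>_def inv_into_into f_inv_into_f)
  have "\<beta> \<tau> \<in> fst c" using \<beta>c \<tau> by auto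
  hence \<Gamma>\<beta>: "\<Gamma> s = \<beta> s" if "\<tau> \<le> s" for s
    using that \<tau> g\<beta>[of \<tau>] chart_inv_into[OF c] by (auto simp: \<Gamma>_def \<psi>_def)
  have "continuous_on ({0..\<tau>} \<union> {\<tau>..1}) \<Gamma>"
    unfolding \<Gamma>_def
  proof (rule continuous_on_cases)
    have "continuous_on (snd c ` fst c) \<psi>"
      using chart_homeomorphism[OF c] homeomorphism_cont2 by (auto simp: \<psi>_def)
    moreover have "continuous_on {0..\<tau>0} g" using g by (rule continuous_on_vector_derivative)
    hence "continuous_on {0..\<tau>} g" by (rule continuous_on_subset) (use \<tau> in auto)
    ultimately show "continuous_on {0..\<tau>} (\<lambda>s. \<psi> (g s))"
      by (rule continuous_on_compose2) (use g_chart in blast)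
    show "continuous_on {\<tau>..1} \<beta>" using \<tau> by (intro continuous_on_subset[OF \<beta>01(1)]) auto
  qed (use \<Gamma>\<beta>[of \<tau>] in \<open>auto simp: \<Gamma>_def\<close>)
  moreover have "{0..\<tau>} \<union> {\<tau>..1} = {0..1::real}" using \<tau> by auto
  ultimately have \<Gamma>c: "continuous_on {0..1} \<Gamma>" by simp
  show ?thesis unfolding \<psi>_def[symmetric] \<Gamma>_def[symmetric]
  proof (rule fut_timelike_curveI[OF \<Gamma>c])
    show "\<Gamma> 0 = \<psi> (g 0)" "\<Gamma> 1 = x" using \<tau> \<beta>01 by (simp_all add: \<Gamma>_def)
  qed (rule fut_timelike_curve_prepend_chart[OF c _ \<tau> \<beta> \<Gamma>c \<Gamma>\<beta> \<Gamma>_chart g g' g_future])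
qed

lemma exists_chart_point_towards:
  assumes c: "c \<in> A" and U: "open U" "p \<in> fst c \<inter> U" "U \<subseteq> closure S" and \<epsilon>: "\<epsilon> > 0"
  obtains b \<delta> where "\<delta> > 0" "b \<in> snd c ` fst c" "inv_into (fst c) (snd c) b \<in> S"
    "norm (b - snd c p) < \<epsilon>" "dist ((1/\<delta>) *\<^sub>R (b - snd c p)) v < \<epsilon>"
proof -
  define a where "a = snd c p"
  have "open (snd c ` (fst c \<inter> U))" "a \<in> snd c ` (fst c \<inter> U)"
    using chart_image_Int_open[OF c U(1)] U(2) by (auto simp: a_def)
  then obtain r where r: "r > 0" "ball a r \<subseteq> snd c ` (fst c \<inter> U)" using open_contains_ball by blast
  define \<mu> where "\<mu> = min r \<epsilon>"
  define \<delta> where "\<delta> = \<mu> / (norm v + \<epsilon> + 1)"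
  have \<mu>: "\<mu> > 0" using r \<epsilon> by (simp add: \<mu>_def)
  have n: "norm v + \<epsilon> + 1 > 0" using \<epsilon> norm_ge_zero[of v] by linarith
  have \<delta>: "\<delta> > 0" "\<delta> * (norm v + \<epsilon>) < \<mu>"
  proof -
    show "\<delta> > 0" using \<mu> n by (simp add: \<delta>_def)
    hence "\<delta> * (norm v + \<epsilon>) < \<delta> * (norm v + \<epsilon> + 1)" by simp
    also have "\<dots> = \<mu>" using n by (simp add: \<delta>_def)
    finally show "\<delta> * (norm v + \<epsilon>) < \<mu>" .
  qed
  define B where "B = ball (a + \<delta> *\<^sub>R v) (\<delta> * \<epsilon>)"
  have B_near: "norm (b - a) < \<mu>" if "b \<in> B" for b
  proof -
    have "norm (b - a) \<le> norm (b - (a + \<delta> *\<^sub>R v)) + norm (\<delta> *\<^sub>R v)"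
      using norm_triangle_ineq[of "b - (a + \<delta> *\<^sub>R v)" "\<delta> *\<^sub>R v"] by simp
    also have "\<dots> < \<delta> * \<epsilon> + \<delta> * norm v"
      using that \<delta> by (simp add: B_def dist_norm norm_minus_commute)
    finally show ?thesis using \<delta> by (simp add: algebra_simps)
  qed
  have BU: "B \<subseteq> snd c ` (fst c \<inter> U)"
    using B_near r by (force simp: \<mu>_def dist_norm norm_minus_commute)
  have "open (inv_into (fst c) (snd c) ` B)"
    using BU by (intro chart_inverse_image_open[OF c]) (auto simp: B_def)
  moreover have "inv_into (fst c) (snd c) ` B \<subseteq> U"
    using BU chart_inv_into[OF c] by force
  moreover have "B \<noteq> {}" using mult_pos_pos[OF \<delta>(1) \<epsilon>] by (simp add: B_def)
  ultimately have "inv_into (fst c) (snd c) ` B \<inter> S \<noteq> {}"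
    using U(3) open_Int_closure_eq_empty by blast
  then obtain b where b: "b \<in> B" "inv_into (fst c) (snd c) b \<in> S" by blast
  have "dist ((1/\<delta>) *\<^sub>R (b - a)) v = (1/\<delta>) * dist b (a + \<delta> *\<^sub>R v)"
  proof -
    have "(1/\<delta>) *\<^sub>R (b - a) - v = (1/\<delta>) *\<^sub>R (b - (a + \<delta> *\<^sub>R v))"
      using \<delta> by (simp add: algebra_simps)
    thus ?thesis using \<delta> by (simp add: dist_norm)
  qed
  also have "\<dots> < (1/\<delta>) * (\<delta> * \<epsilon>)"
    using b(1) \<delta> by (intro mult_strict_left_mono) (auto simp: B_def dist_commute)
  finally show ?thesis
    using that[of \<delta> b] \<delta> b BU B_near[OF b(1)] by (auto simp: a_def \<mu>_def)
qed

lemma fut_timelike_curve_initial_segment: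
  assumes \<beta>: "fut_timelike_curve A G X \<beta> b x" and c: "c \<in> A" "b \<in> fst c" and r: "r > 0"
  obtains \<tau>0 w where "0 < \<tau>0" "\<tau>0 < 1" "continuous_on {0..\<tau>0} w"
    "\<And>s. s \<in> {0..\<tau>0} \<Longrightarrow> \<beta> s \<in> fst c \<and> dist (snd c (\<beta> s)) (snd c b) < r"
    "\<And>s. s \<in> {0..\<tau>0} \<Longrightarrow> ((snd c \<circ> \<beta>) has_vector_derivative w s) (at s within {0..\<tau>0}) \<and>
       future_timelike (G c (snd c (\<beta> s))) (X c (snd c (\<beta> s))) (w s)"
proof -
  have \<beta>01: "continuous_on {0..1} \<beta>" "\<beta> 0 = b" using \<beta> by (simp_all add: fut_timelike_curve_def)
  have "continuous_on (fst c) (snd c)" using chart_homeomorphism[OF c(1)] homeomorphism_cont1 by blast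
  hence "open (fst c \<inter> snd c -` ball (snd c b) r)"
    by (rule continuous_open_preimage[OF _ chart_open[OF c(1)]]) simp
  moreover have "\<beta> 0 \<in> fst c \<inter> snd c -` ball (snd c b) r" using \<beta>01(2) c(2) r by simp
  ultimately obtain \<tau>0 where \<tau>0: "0 < \<tau>0" "\<tau>0 < 1" "\<beta> ` {0..\<tau>0} \<subseteq> fst c \<inter> snd c -` ball (snd c b) r"
    using continuous_on_initially_in_open[OF \<beta>01(1)] by blast
  define Sc where "Sc = {t\<in>{0..1}. \<beta> t \<in> fst c}"
  obtain w where w: "continuous_on Sc w" and wd: "\<And>t. t \<in> Sc \<Longrightarrow>
      ((snd c \<circ> \<beta>) has_vector_derivative w t) (at t within Sc) \<and>
      future_timelike (G c (snd c (\<beta> t))) (X c (snd c (\<beta> t))) (w t)"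
    using fut_timelike_curve_chartE[OF \<beta> c(1)] unfolding Sc_def by blast
  have sub: "{0..\<tau>0} \<subseteq> Sc" using \<tau>0 by (auto simp: Sc_def)
  show ?thesis
  proof (rule that[OF \<tau>0(1,2) continuous_on_subset[OF w sub]])
    show "\<beta> s \<in> fst c \<and> dist (snd c (\<beta> s)) (snd c b) < r" if "s \<in> {0..\<tau>0}" for s
      using that \<tau>0(3) by (force simp: dist_commute)
    show "((snd c \<circ> \<beta>) has_vector_derivative w s) (at s within {0..\<tau>0}) \<and>
       future_timelike (G c (snd c (\<beta> s))) (X c (snd c (\<beta> s))) (w s)" if "s \<in> {0..\<tau>0}" for s
      using wd[of s] that sub by (blast intro: has_vector_derivative_within_subset)
  qed
qed

text \<open>If b lies slightly to the future of p in the chart, any curve from b to x can be bent at its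
  start so that it leaves from p instead.\<close>

lemma chron_from_chart_future_point:
  assumes c: "c \<in> A" "p \<in> fst c"
    and \<epsilon>: "\<epsilon> > 0" "cball (snd c p) \<epsilon> \<subseteq> snd c ` fst c"
    and stab: "\<And>y u. dist y (snd c p) < \<epsilon> \<Longrightarrow> dist u e0 < \<epsilon> \<Longrightarrow> future_timelike (G c y) (X c y) u"
    and b: "b \<in> snd c ` fst c" "chron A G X (inv_into (fst c) (snd c) b) x"
    and \<delta>: "\<delta> > 0" "dist ((1/\<delta>) *\<^sub>R (b - snd c p)) e0 < \<epsilon>/2" "norm (b - snd c p) < \<epsilon>/2"
  shows "chron A G X p x"
proof -
  define a where "a = snd c p"
  define e where "e = b - a"
  obtain \<beta> where \<beta>: "fut_timelike_curve A G X \<beta> (inv_into (fst c) (snd c) b) x"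
    using b(2) by (auto simp: chron_def)
  have b': "inv_into (fst c) (snd c) b \<in> fst c" "snd c (inv_into (fst c) (snd c) b) = b"
    using b(1) by (simp_all add: inv_into_into f_inv_into_f)
  obtain \<tau>0 w where \<tau>0: "0 < \<tau>0" "\<tau>0 < 1" and cw: "continuous_on {0..\<tau>0} w"
    and \<beta>_near: "\<And>s. s \<in> {0..\<tau>0} \<Longrightarrow> \<beta> s \<in> fst c \<and> dist (snd c (\<beta> s)) b < \<epsilon>/2"
    and wd: "\<And>s. s \<in> {0..\<tau>0} \<Longrightarrow> ((snd c \<circ> \<beta>) has_vector_derivative w s) (at s within {0..\<tau>0}) \<and>
       future_timelike (G c (snd c (\<beta> s))) (X c (snd c (\<beta> s))) (w s)"
    using fut_timelike_curve_initial_segment[OF \<beta> c(1) b'(1) half_gt_zero[OF \<epsilon>(1)]] b'(2) by metis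
  have "continuous_on {0..\<tau>0} (snd c \<circ> \<beta>)"
    using wd by (intro continuous_on_vector_derivative) blast
  hence cb: "continuous_on {0..\<tau>0} (\<lambda>s. snd c (\<beta> s))" by (simp add: o_def)
  have LX: "lorentz_sig (G c y) \<and> gform (G c y) (X c y) (X c y) < 0" if "y \<in> snd c ` fst c" for y
    using that metric_lorentz_sig[OF c(1)] time_orientation_timelike[OF c(1)] by blast
  have near: "dist (snd c (\<beta> s)) (a + e) < \<epsilon>/2" if "s \<in> {0..\<tau>0}" for s
    using \<beta>_near[OF that] by (simp add: e_def)
  have tw: "future_timelike (G c (snd c (\<beta> s))) (X c (snd c (\<beta> s))) (w s)" if "s \<in> {0..\<tau>0}" for s
    using wd[OF that] by blast
  have "cball a \<epsilon> \<subseteq> snd c ` fst c" "dist ((1/\<delta>) *\<^sub>R e) e0 < \<epsilon>/2" "norm e < \<epsilon>/2"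
    "\<And>y u. dist y a < \<epsilon> \<Longrightarrow> dist u e0 < \<epsilon> \<Longrightarrow> future_timelike (G c y) (X c y) u"
    using \<epsilon>(2) \<delta>(2,3) stab by (simp_all add: a_def e_def)
  from future_timelike_deformation[OF chart_image_open[OF c(1)] LX metric_continuous_on[OF c(1)]
      time_orientation_continuous_on[OF c(1)] \<epsilon>(1) this(1) this(4) \<delta>(1) this(2,3) \<tau>0(1) cb cw near tw]
  obtain \<tau> where \<tau>: "0 < \<tau>" "\<tau> < \<tau>0" and deform: "\<And>s. s \<in> {0..\<tau>} \<Longrightarrow>
      dist (snd c (\<beta> s) - (1 - s/\<tau>)\<^sup>2 *\<^sub>R e) a < \<epsilon> \<and>
      future_timelike (G c (snd c (\<beta> s) - (1 - s/\<tau>)\<^sup>2 *\<^sub>R e)) (X c (snd c (\<beta> s) - (1 - s/\<tau>)\<^sup>2 *\<^sub>R e))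
        (w s + (2 * (1 - s/\<tau>) / \<tau>) *\<^sub>R e)"
    by blast
  define g where "g s = snd c (\<beta> s) - (max 0 (1 - s/\<tau>))\<^sup>2 *\<^sub>R e" for s
  define g' where "g' s = w s + (2 * max 0 (1 - s/\<tau>) / \<tau>) *\<^sub>R e" for s
  have max_early: "max 0 (1 - s/\<tau>) = 1 - s/\<tau>" if "s \<le> \<tau>" for s using that \<tau> by (simp add: field_simps)
  have max_late: "max 0 (1 - s/\<tau>) = 0" if "\<tau> \<le> s" for s using that \<tau> by (simp add: field_simps)
  have "fut_timelike_curve A G X (\<lambda>s. if s \<le> \<tau> then inv_into (fst c) (snd c) (g s) else \<beta> s)
      (inv_into (fst c) (snd c) (g 0)) x"
  proof (rule fut_timelike_curve_prepend[OF c(1) \<tau> \<tau>0(2) \<beta>])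
    show "\<beta> ` {0..\<tau>0} \<subseteq> fst c" using \<beta>_near by blast
    show "(g has_vector_derivative g' s) (at s within {0..\<tau>0})" if "s \<in> {0..\<tau>0}" for s
      using has_vector_derivative_deformation[OF wd[OF that, THEN conjunct1] \<tau>(1)]
      unfolding g_def g'_def by (simp add: o_def)
    show "continuous_on {0..\<tau>0} g'"
      unfolding g'_def using \<tau>(1) by (intro continuous_intros cw) auto
    show "g s = snd c (\<beta> s)" if "s \<in> {\<tau>..\<tau>0}" for s using that max_late by (simp add: g_def)
    show "g s \<in> snd c ` fst c" if "s \<in> {0..\<tau>}" for s
    proof -
      have "dist (g s) a < \<epsilon>" using deform[OF that] max_early[of s] that by (simp add: g_def)
      hence "g s \<in> cball (snd c p) \<epsilon>" by (simp add: a_def dist_commute)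
      thus ?thesis using \<epsilon>(2) by blast
    qed
    show "future_timelike (G c (g s)) (X c (g s)) (g' s)" if "s \<in> {0..\<tau>}" for s
      using deform[OF that] max_early[of s] that by (simp add: g_def g'_def)
  qed
  moreover have "inv_into (fst c) (snd c) (g 0) = p"
  proof -
    have "\<beta> 0 = inv_into (fst c) (snd c) b" using \<beta> by (simp add: fut_timelike_curve_def)
    hence "g 0 = snd c p" using b'(2) max_early[of 0] \<tau> by (simp add: g_def e_def a_def)
    thus ?thesis using chart_inv_into[OF c] by simp
  qed
  ultimately show ?thesis by (auto simp: chron_def)
qed

lemma chron_of_open_subset_closure_Ipast:
  assumes U: "open U" "U \<subseteq> closure (Ipast A G X x)" and p: "p \<in> U"
  shows "chron A G X p x"
proof -
  obtain c where c: "c \<in> A" "p \<in> fst c" using charts_cover by blast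
  have a: "snd c p \<in> snd c ` fst c" using c by simp
  have "future_timelike (G c (snd c p)) (X c (snd c p)) (X c (snd c p))"
    using time_orientation_timelike[OF c(1) a] by (simp add: future_timelike_def)
  from future_timelike_stable[OF chart_image_open[OF c(1)] a metric_continuous_on[OF c(1)]
      time_orientation_continuous_on[OF c(1)] this]
  obtain \<epsilon> where \<epsilon>: "\<epsilon> > 0" "cball (snd c p) \<epsilon> \<subseteq> snd c ` fst c"
    and stab: "\<And>y u. dist y (snd c p) < \<epsilon> \<Longrightarrow> dist u (X c (snd c p)) < \<epsilon> \<Longrightarrow> future_timelike (G c y) (X c y) u"
    by blast
  have pU: "p \<in> fst c \<inter> U" using c p by simp
  obtain b \<delta> where b: "\<delta> > 0" "b \<in> snd c ` fst c" "inv_into (fst c) (snd c) b \<in> Ipast A G X x"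
    "norm (b - snd c p) < \<epsilon>/2" "dist ((1/\<delta>) *\<^sub>R (b - snd c p)) (X c (snd c p)) < \<epsilon>/2"
    by (rule exists_chart_point_towards[OF c(1) U(1) pU U(2) half_gt_zero[OF \<epsilon>(1)]])
  have "chron A G X (inv_into (fst c) (snd c) b) x" using b(3) by (simp add: Ipast_def)
  from chron_from_chart_future_point[OF c \<epsilon> stab b(2) this b(1) b(5) b(4)]
  show ?thesis .
qed

lemma interior_closure_Ipast_subset: "interior (closure (Ipast A G X x)) \<subseteq> Ipast A G X x"
proof
  fix p assume "p \<in> interior (closure (Ipast A G X x))"
  from chron_of_open_subset_closure_Ipast[OF open_interior interior_subset this]
  show "p \<in> Ipast A G X x" by (simp add: Ipast_def)
qed

lemma time_oriented_lorentzian_reverse: "time_oriented_lorentzian A G (\<lambda>c y. - X c y)"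
proof -
  have "\<forall>c1\<in>A. \<forall>c2\<in>A. \<forall>p\<in>fst c1 \<inter> fst c2.
      - X c2 (snd c2 p) = frechet_derivative (transition c1 c2) (at (snd c1 p)) (- X c1 (snd c1 p))"
  proof (intro ballI)
    fix c1 c2 p assume c: "c1 \<in> A" "c2 \<in> A" and p: "p \<in> fst c1 \<inter> fst c2"
    have "snd c1 p \<in> snd c1 ` (fst c1 \<inter> fst c2)" using p by blast
    from has_derivative_linear[OF transition_has_derivative[OF c this]]
    show "- X c2 (snd c2 p) = frechet_derivative (transition c1 c2) (at (snd c1 p)) (- X c1 (snd c1 p))"
      using time_orientation_transition[OF c p] linear_neg by metis
  qed
  moreover have "\<forall>c\<in>A. continuous_on (snd c ` fst c) (\<lambda>y. - X c y) \<and>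
      (\<forall>y\<in>snd c ` fst c. gform (G c y) (- X c y) (- X c y) < 0)"
    using time_orientation_continuous_on time_orientation_timelike
    by (simp add: gform_linear continuous_on_minus)
  ultimately show ?thesis
    using smooth_atlas metric_chart metric_transition_all unfolding time_oriented_lorentzian_def
    by (intro conjI) assumption+
qed

lemma interior_closure_Ifut_subset: "interior (closure (Ifut A G X x)) \<subseteq> Ifut A G X x"
proof -
  interpret reverse: spacetime A G "\<lambda>c y. - X c y"
    by (rule spacetime.intro[OF time_oriented_lorentzian_reverse])
  show ?thesis unfolding Ifut_eq_Ipast_reverse by (rule reverse.interior_closure_Ipast_subset)
qed

end

theorem claim2:
  fixes A :: "('m::{t2_space, second_countable_topology}, 'n::finite) chart set"
    and G :: "('m, 'n) chart \<Rightarrow> real^'n \<Rightarrow> real^'n^'n"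
    and X :: "('m, 'n) chart \<Rightarrow> real^'n \<Rightarrow> real^'n"
    and x :: 'm
  assumes "time_oriented_lorentzian A G X"
  shows "((\<exists>y\<in>down_set A G X (Ifut A G X x). y \<notin> Ipast A G X x) \<longrightarrow>
            (\<exists>z\<in>down_set A G X (Ifut A G X x). z \<notin> closure (Ipast A G X x)))
       \<and> (up_set A G X (Ipast A G X x) - Ifut A G X x \<noteq> {} \<longrightarrow>
            (\<exists>z\<in>up_set A G X (Ipast A G X x). z \<notin> closure (Ifut A G X x)))"
proof -
  interpret spacetime A G X by (rule spacetime.intro[OF assms])
  have "open (down_set A G X (Ifut A G X x))" "open (up_set A G X (Ipast A G X x))"
    unfolding down_set_def up_set_def by (rule open_interior)+
  with open_not_subset_closure[OF _ interior_closure_Ipast_subset]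
    open_not_subset_closure[OF _ interior_closure_Ifut_subset]
  show ?thesis by blast
qed

end
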